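(* Let $k\ge 2$ be even and $i\in\{1,\ldots,k-1\}$ such that $\binom{k}{i}$ and $\binom{k-1}{i}$ are both odd (so $i$ is even and $k-i+2\le k$). Then $\lambda_{k-i+2}-\lambda_{k-i}\equiv 2\pmod 4$.
   Context: For $0\le i\le k$ and $j=0,\ldots,k$ define $\lambda_j=\sum_{\ell=0}^{k-i}(-1)^\ell\binom{j}{\ell}\binom{k-j}{i-j+\ell}^2$, with the convention $\binom{a}{b}=0$ unless $0\le b\le a$; these are the eigenvalues of the graph $J(2k,k,i)$ on $k$-subsets of $\{1,\ldots,2k\}$ (adjacent iff intersection has size $i$). *)

theory Defs
  imports Main
begin

definition ibinom :: "int \<Rightarrow> int \<Rightarrow> int" where
  "ibinom a b = (if 0 \<le> b \<and> b \<le> a then int (nat a choose nat b) else 0)"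

text \<open>Eigenvalue lambda_j of J(2k,k,i).\<close>
definition lam :: "nat \<Rightarrow> nat \<Rightarrow> nat \<Rightarrow> int" where
  "lam k i j = (\<Sum>l = 0..k - i. (-1) ^ l * ibinom (int j) (int l)
       * (ibinom (int k - int j) (int i - int j + int l))^2)"

end

theory Submission
  imports Defs "HOL-Number_Theory.Cong"
begin

text \<open>
  Since C(k, i) is odd and k is even, Lucas' theorem forces i to be even; write k = 2(r + n + 1)
  and i = 2(n + 1). In the alternating sum defining an eigenvalue, the terms with odd l vanish
  modulo 4, as they contain the square of a binomial coefficient C(2a, odd), which is even; for
  even l one has C(2a, 2b) = C(a, b) (mod 4), and squares only depend on residues mod 2. So both
  eigenvalues reduce modulo 4 to convolutions sum_d C(p, d) C(q, r - d)^2. By Pascal's rule the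
  difference of the two convolutions is exactly -2 S with S = sum_c C(r, c+1) C(n, c+1) C(n, c),
  and a Lucas-type recursion for S modulo 2 gives S = C(r + n, n + 1) = C(k - 1, i) = 1 (mod 2).
\<close>

lemma even_binomial_even_odd:
  assumes "even n" "odd d"
  shows "even (n choose d)"
proof (cases n)
  case 0
  then show ?thesis using assms(2) by (cases d) auto
next
  case (Suc n')
  obtain d' where d: "d = Suc d'"
    using assms(2) by (cases d) auto
  have "d * (n choose d) = n * (n' choose d')"
    unfolding Suc d by (rule Suc_times_binomial)
  then have "even (d * (n choose d))"
    using assms(1) by simp
  then show ?thesis
    using assms(2) by simp
qed

lemma odd_iff_cong_mod2: "[(a::nat) = b] (mod 2) \<Longrightarrow> odd a \<longleftrightarrow> odd b"
  by (simp add: cong_def odd_iff_mod_2_eq_one)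

lemma square_cong_mod2: "[(x::nat)^2 = x] (mod 2)"
proof -
  have "x * x mod 2 = (x mod 2) * (x mod 2) mod 2"
    by (simp add: mod_mult_eq)
  moreover have "x mod 2 = 0 \<or> x mod 2 = 1"
    by auto
  ultimately show ?thesis
    unfolding cong_def power2_eq_square by auto
qed

lemma binomial_double_cong_mod4: "[(2*n choose (2*c)) = (n choose c)] (mod 4)"
proof (induction n arbitrary: c)
  case 0
  then show ?case by (cases c) auto
next
  case (Suc n)
  show ?case
  proof (cases c)
    case 0
    then show ?thesis by simp
  next
    case (Suc d)
    have pascal2: "(2 * Suc n choose (2 * c)) =
        (2*n choose (2*d)) + 2 * (2*n choose Suc (2*d)) + (2*n choose (2 * Suc d))"
      using Suc by simp
    obtain q where "(2*n choose Suc (2*d)) = 2*q"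
      using even_binomial_even_odd[of "2*n" "Suc (2*d)"] by auto
    then have "[2 * (2*n choose Suc (2*d)) = 0] (mod 4)"
      by (simp add: cong_0_iff)
    then have "[(2 * Suc n choose (2 * c)) = (n choose d) + 0 + (n choose Suc d)] (mod 4)"
      unfolding pascal2 by (intro cong_add Suc.IH)
    then show ?thesis
      using Suc by simp
  qed
qed

lemma binomial_lucas_even:
  assumes "e \<le> 1"
  shows "[(2*n + e choose (2*c)) = (n choose c)] (mod 2)"
proof -
  have even_case: "[(2*n choose (2*c)) = (n choose c)] (mod 2)" for c
    using binomial_double_cong_mod4 by (rule cong_dvd_modulus_nat) simp
  show ?thesis
  proof (cases "e = 0 \<or> c = 0")
    case True
    with assms even_case show ?thesis by auto
  next
    case False
    then obtain d where "c = Suc d" "e = 1"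
      using assms by (cases c) auto
    moreover have "[(2*n choose Suc (2*d)) + (2*n choose (2*c)) = 0 + (n choose c)] (mod 2)"
      using even_binomial_even_odd[of "2*n" "Suc (2*d)"]
      by (intro cong_add even_case) (simp add: cong_0_iff)
    ultimately show ?thesis by simp
  qed
qed

lemma binomial_lucas_odd:
  assumes "e \<le> 1"
  shows "[(2*n + e choose Suc (2*c)) = e * (n choose c)] (mod 2)"
proof (cases "e = 0")
  case True
  then show ?thesis
    using even_binomial_even_odd[of "2*n" "Suc (2*c)"] by (simp add: cong_0_iff)
next
  case False
  then have "e = 1" using assms by simp
  moreover have "[(2*n choose (2*c)) + (2*n choose Suc (2*c)) = (n choose c) + 0] (mod 2)"
    using binomial_lucas_even[of 0 n c] even_binomial_even_odd[of "2*n" "Suc (2*c)"]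
    by (intro cong_add) (simp_all add: cong_0_iff)
  ultimately show ?thesis by simp
qed

definition cross_sum :: "nat \<Rightarrow> nat \<Rightarrow> nat" where
  "cross_sum m n = (\<Sum>c<m. (m choose Suc c) * (n choose Suc c) * (n choose c))"

lemma cross_sum_extend:
  assumes "m \<le> R"
  shows "(\<Sum>c<R. (m choose Suc c) * (n choose Suc c) * (n choose c)) = cross_sum m n"
  unfolding cross_sum_def by (rule sum.mono_neutral_right) (use assms in auto)

lemma sum_binomial_products:
  assumes "m < R"
  shows "(\<Sum>d<R. (m choose d) * (n choose d)) = (m + n choose n)"
proof -
  have "(\<Sum>d<R. (m choose d) * (n choose d)) = (\<Sum>d<R+n+1. (m choose d) * (n choose d))"
    by (rule sum.mono_neutral_left) (use assms in auto)
  also have "\<dots> = (\<Sum>d\<le>n. (m choose d) * (n choose d))"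
    by (rule sum.mono_neutral_right) auto
  also have "\<dots> = (\<Sum>d\<le>n. (m choose d) * (n choose (n - d)))"
    by (rule sum.cong) (auto simp: binomial_symmetric[symmetric])
  also have "\<dots> = (m + n choose n)"
    by (rule vandermonde)
  finally show ?thesis .
qed

text \<open>Split the summation index c by parity and apply Lucas' theorem to every factor.\<close>

lemma cross_sum_cong_mod2:
  assumes "e \<le> 1" "f \<le> 1"
  shows "[cross_sum (2*m + e) (2*n + f) = f * (cross_sum m n + e * (m + n choose n))] (mod 2)"
proof -
  let ?g = "\<lambda>c. (2*m + e choose Suc c) * (2*n + f choose Suc c) * (2*n + f choose c)"
  have "cross_sum (2*m + e) (2*n + f) = (\<Sum>c\<le>Suc (2*m). ?g c)"
    using cross_sum_extend[of "2*m + e" "Suc (Suc (2*m))"] assms(1)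
    by (simp add: lessThan_Suc_atMost)
  also have "\<dots> = (\<Sum>d\<le>m. ?g (2*d) + ?g (Suc (2*d)))"
    by (rule sum.in_pairs_0)
  finally have pairs: "cross_sum (2*m + e) (2*n + f) = (\<Sum>d<Suc m. ?g (2*d) + ?g (Suc (2*d)))"
    by (simp add: lessThan_Suc_atMost)
  have "[?g (2*d) + ?g (Suc (2*d)) = f * e * ((m choose d) * (n choose d))
          + f * ((m choose Suc d) * (n choose Suc d) * (n choose d))] (mod 2)" for d
  proof -
    have "[?g (2*d) = (e * (m choose d)) * (f * (n choose d)) * (n choose d)] (mod 2)"
      by (intro cong_mult binomial_lucas_even binomial_lucas_odd assms)
    also have "(e * (m choose d)) * (f * (n choose d)) * (n choose d)
        = f * e * ((m choose d) * (n choose d)^2)"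
      by (simp add: power2_eq_square)
    also have "[f * e * ((m choose d) * (n choose d)^2) = f * e * ((m choose d) * (n choose d))] (mod 2)"
      by (intro cong_mult cong_refl square_cong_mod2)
    finally have even_term: "[?g (2*d) = f * e * ((m choose d) * (n choose d))] (mod 2)" .
    have "?g (Suc (2*d)) = (2*m + e choose 2 * Suc d) * (2*n + f choose 2 * Suc d)
        * (2*n + f choose Suc (2*d))"
      by simp
    then have odd_term: "[?g (Suc (2*d)) = (m choose Suc d) * (n choose Suc d) * (f * (n choose d))] (mod 2)"
      by (simp only:) (intro cong_mult binomial_lucas_even binomial_lucas_odd assms)
    show ?thesis
      using cong_add[OF even_term odd_term] by (simp add: ac_simps)
  qed
  then have "[cross_sum (2*m + e) (2*n + f) = (\<Sum>d<Suc m. f * e * ((m choose d) * (n choose d))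
          + f * ((m choose Suc d) * (n choose Suc d) * (n choose d)))] (mod 2)"
    unfolding pairs by (rule cong_sum)
  also have "(\<Sum>d<Suc m. f * e * ((m choose d) * (n choose d))
          + f * ((m choose Suc d) * (n choose Suc d) * (n choose d)))
      = f * e * (m + n choose n) + f * cross_sum m n"
    using sum_binomial_products[of m "Suc m" n] cross_sum_extend[of m "Suc m" n]
    by (simp only: sum.distrib sum_distrib_left[symmetric] mult.assoc lessI le_SucI order_refl)
  finally show ?thesis
    by (simp add: algebra_simps)
qed

lemma cross_sum_parity:
  assumes "odd (m + n + 1 choose Suc n)"
  shows "[cross_sum m n = (m + n choose Suc n)] (mod 2)"
  using assms
proof (induction n arbitrary: m rule: less_induct)
  case (less n)
  obtain M e where m: "m = 2*M + e" "e \<le> 1"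
  proof
    show "m = 2 * (m div 2) + m mod 2" "m mod 2 \<le> 1" by auto
  qed
  consider (even) N where "n = 2*N" | (odd) N where "n = 2*N + 1"
    by (metis evenE oddE)
  then show ?case
  proof cases
    case even
    have "e = 0"
    proof (rule ccontr)
      assume "e \<noteq> 0"
      then have "m + n + 1 = 2 * (M + N + 1) + 0"
        using m even by simp
      then have "[(m + n + 1 choose Suc n) = 0] (mod 2)"
        using binomial_lucas_odd[of 0 "M + N + 1" N] even by simp
      with less.prems show False
        using odd_iff_cong_mod2 by fastforce
    qed
    have "[cross_sum m n = 0] (mod 2)"
      using cross_sum_cong_mod2[of e 0 M N] m even by simp
    also have "[0 = (m + n choose Suc n)] (mod 2)"
      using binomial_lucas_odd[of 0 "M + N" N] m even \<open>e = 0\<close> by (simp add: cong_sym)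
    finally show ?thesis .
  next
    case odd
    have "[(m + n + 1 choose Suc n) = (M + N + 1 choose Suc N)] (mod 2)"
      using binomial_lucas_even[of e "M + N + 1" "Suc N"] m odd by (simp add: ac_simps)
    then have "odd (M + N + 1 choose Suc N)"
      using less.prems odd_iff_cong_mod2 by blast
    then have IH: "[cross_sum M N = (M + N choose Suc N)] (mod 2)"
      using odd by (intro less.IH) auto
    have "[cross_sum m n = cross_sum M N + e * (M + N choose N)] (mod 2)"
      using cross_sum_cong_mod2[of e 1 M N] m odd by simp
    also have "[cross_sum M N + e * (M + N choose N)
        = (M + N choose Suc N) + e * (M + N choose N)] (mod 2)"
      using IH by (intro cong_add cong_refl)
    also have "[(M + N choose Suc N) + e * (M + N choose N) = (m + n choose Suc n)] (mod 2)"
    proof (cases "e = 0")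
      case True
      then show ?thesis
        using binomial_lucas_even[of 1 "M + N" "Suc N"] m odd by (simp add: cong_sym)
    next
      case False
      then have "e = 1" using m(2) by simp
      then show ?thesis
        using binomial_lucas_even[of 0 "M + N + 1" "Suc N"] m odd by (simp add: cong_sym ac_simps)
    qed
    finally show ?thesis .
  qed
qed

lemma odd_cross_sum:
  assumes "odd (2*(m + n + 1) choose 2*(n + 1))" "odd (2*(m + n) + 1 choose 2*(n + 1))"
  shows "odd (cross_sum m n)"
proof -
  have "odd (m + n + 1 choose Suc n)"
    using assms(1) odd_iff_cong_mod2[OF binomial_lucas_even[of 0 "m + n + 1" "n + 1"]] by simp
  then have "[cross_sum m n = (m + n choose Suc n)] (mod 2)"
    by (rule cross_sum_parity)
  moreover have "odd (m + n choose Suc n)"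
    using assms(2) odd_iff_cong_mod2[OF binomial_lucas_even[of 1 "m + n" "n + 1"]] by simp
  ultimately show ?thesis
    using odd_iff_cong_mod2 by blast
qed

definition binomial_sq_conv :: "nat \<Rightarrow> nat \<Rightarrow> nat \<Rightarrow> int" where
  "binomial_sq_conv p q r = (\<Sum>d\<le>r. int (p choose d) * int (q choose (r - d))^2)"

lemma binomial_sq_conv_reflect:
  "binomial_sq_conv p q r = (\<Sum>a\<le>r. int (p choose (r - a)) * int (q choose a)^2)"
  unfolding binomial_sq_conv_def
  using sum.atLeastAtMost_rev[of "\<lambda>d. int (p choose d) * int (q choose (r - d))^2" 0 r]
  by (simp add: atLeast0AtMost)

text \<open>Pascal's rule on both convolutions: the squares cancel and only the cross terms remain.\<close>

lemma binomial_sq_conv_diff: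
  "binomial_sq_conv (Suc m) n m - binomial_sq_conv m (Suc n) m = - 2 * int (cross_sum m n)"
proof -
  define u where "u c = int (n choose c)" for c
  have "binomial_sq_conv (Suc m) n m = (\<Sum>a<Suc m. int (Suc m choose Suc a) * u a^2)"
    unfolding binomial_sq_conv_reflect lessThan_Suc_atMost u_def
  proof (intro sum.cong refl)
    fix a assume "a \<in> {..m}"
    then have "Suc m choose (m - a) = Suc m choose (Suc m - (m - a))"
      by (intro binomial_symmetric) auto
    with \<open>a \<in> {..m}\<close> show "int (Suc m choose (m - a)) * int (n choose a)^2
        = int (Suc m choose Suc a) * int (n choose a)^2"
      by (simp add: Suc_diff_le)
  qed
  also have "\<dots> = (\<Sum>a<Suc m. int (m choose a) * u a^2) + (\<Sum>a<Suc m. int (m choose Suc a) * u a^2)"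
    by (simp add: sum.distrib[symmetric] algebra_simps)
  also have "(\<Sum>a<Suc m. int (m choose a) * u a^2) = 1 + (\<Sum>c<m. int (m choose Suc c) * u (Suc c)^2)"
    by (subst sum.lessThan_Suc_shift) (simp add: u_def)
  also have "(\<Sum>a<Suc m. int (m choose Suc a) * u a^2) = (\<Sum>c<m. int (m choose Suc c) * u c^2)"
    by simp
  finally have lhs: "binomial_sq_conv (Suc m) n m
      = 1 + (\<Sum>c<m. int (m choose Suc c) * u (Suc c)^2) + (\<Sum>c<m. int (m choose Suc c) * u c^2)" .
  have "binomial_sq_conv m (Suc n) m = (\<Sum>a<Suc m. int (m choose a) * int (Suc n choose a)^2)"
    unfolding binomial_sq_conv_reflect lessThan_Suc_atMost
    by (intro sum.cong refl) (simp add: binomial_symmetric[symmetric])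
  also have "\<dots> = 1 + (\<Sum>c<m. int (m choose Suc c) * (u (Suc c) + u c)^2)"
    by (subst sum.lessThan_Suc_shift) (simp add: u_def add.commute)
  finally have rhs: "binomial_sq_conv m (Suc n) m = 1 + (\<Sum>c<m. int (m choose Suc c) * (u (Suc c) + u c)^2)" .
  have "(\<Sum>c<m. int (m choose Suc c) * u (Suc c)^2) + (\<Sum>c<m. int (m choose Suc c) * u c^2)
      - (\<Sum>c<m. int (m choose Suc c) * (u (Suc c) + u c)^2)
      = - 2 * (\<Sum>c<m. int (m choose Suc c) * u (Suc c) * u c)"
    by (simp add: sum_distrib_left sum.distrib[symmetric] sum_subtractf[symmetric]
        power2_eq_square algebra_simps)
  also have "\<dots> = - 2 * int (cross_sum m n)"
    by (simp add: cross_sum_def u_def)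
  finally show ?thesis
    unfolding lhs rhs by simp
qed

lemma sum_atMost_double_split:
  fixes g :: "nat \<Rightarrow> 'a::comm_monoid_add"
  shows "(\<Sum>l\<le>2*r. g l) = (\<Sum>d\<le>r. g (2*d)) + (\<Sum>d<r. g (Suc (2*d)))"
  by (induction r) (simp_all add: ac_simps)

lemma square_cong_mod4:
  assumes "[(a::int) = b] (mod 2)"
  shows "[a^2 = b^2] (mod 4)"
proof -
  have "2 dvd a - b" "2 dvd a + b"
    using assms by (simp_all add: cong_iff_dvd_diff dvd_add_left_iff[symmetric])
  then have "2 * 2 dvd (a - b) * (a + b)"
    by (rule mult_dvd_mono)
  then show ?thesis
    by (simp add: cong_iff_dvd_diff power2_eq_square algebra_simps)
qed

lemma alternating_sum_double_cong_mod4: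
  "[(\<Sum>l\<le>2*r. (-1)^l * int (2*p choose l) * int (2*q choose (2*r - l))^2)
    = binomial_sq_conv p q r] (mod 4)"
proof -
  let ?g = "\<lambda>l. (-1)^l * int (2*p choose l) * int (2*q choose (2*r - l))^2 :: int"
  have "[?g (2*d) = int (p choose d) * int (q choose (r - d))^2] (mod 4)" if "d \<le> r" for d
  proof -
    have "2*r - 2*d = 2*(r - d)"
      by simp
    then have g_even: "?g (2*d) = int (2*p choose (2*d)) * int (2*q choose (2*(r - d)))^2"
      by (simp only:) simp
    have "[int (2*p choose (2*d)) = int (p choose d)] (mod 4)"
      using binomial_double_cong_mod4[of p d] cong_int_iff[of _ _ 4] by simp
    moreover have "[int (2*q choose (2*(r - d))) = int (q choose (r - d))] (mod 2)"
      using binomial_lucas_even[of 0 q "r - d"] cong_int_iff[of _ _ 2] by simp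
    ultimately show ?thesis
      unfolding g_even by (intro cong_mult square_cong_mod4)
  qed
  then have even_part: "[(\<Sum>d\<le>r. ?g (2*d)) = binomial_sq_conv p q r] (mod 4)"
    unfolding binomial_sq_conv_def by (intro cong_sum) auto
  have "[?g (Suc (2*d)) = 0] (mod 4)" if "d < r" for d
  proof -
    have odd_index: "2*r - Suc (2*d) = Suc (2*(r - Suc d))"
      using that by simp
    obtain c where c: "(2*q choose Suc (2*(r - Suc d))) = 2*c"
      using even_binomial_even_odd[of "2*q" "Suc (2*(r - Suc d))"] by auto
    have "?g (Suc (2*d)) = 4 * (- int (2*p choose Suc (2*d)) * int c^2)"
      unfolding odd_index c by (simp add: power2_eq_square)
    then show ?thesis
      by (simp only: cong_0_iff dvd_triv_left)
  qed
  then have "[(\<Sum>d<r. ?g (Suc (2*d))) = (\<Sum>d<r. 0)] (mod 4)"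
    by (intro cong_sum) auto
  then have odd_part: "[(\<Sum>d<r. ?g (Suc (2*d))) = 0] (mod 4)"
    by (simp only: sum.neutral_const)
  show ?thesis
    unfolding sum_atMost_double_split using cong_add[OF even_part odd_part] by simp
qed

lemma ibinom_of_nat: "ibinom (int a) (int b) = int (a choose b)"
  unfolding ibinom_def by simp

lemma ibinom_of_nat_complement: "ibinom (int a) (int a - int d) = int (a choose d)"
  unfolding ibinom_def
  by (cases "d \<le> a") (auto simp: nat_diff_distrib binomial_symmetric[symmetric])

text \<open>The hypothesis i \<le> k is needed: otherwise the truncated summation bound k - i does not
  match the integer lower index i - j + l.\<close>

lemma lam_eq_alternating_sum:
  assumes "i \<le> k" "j \<le> k"
  shows "lam k i j = (\<Sum>l\<le>k - i. (-1)^l * int (j choose l) * int (k - j choose (k - i - l))^2)"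
  unfolding lam_def atLeast0AtMost
proof (intro sum.cong refl)
  fix l assume "l \<in> {..k - i}"
  then have "int k - int j = int (k - j)" "int i - int j + int l = int (k - j) - int (k - i - l)"
    using assms by auto
  then show "(-1)^l * ibinom (int j) (int l) * (ibinom (int k - int j) (int i - int j + int l))^2
      = (-1)^l * int (j choose l) * int (k - j choose (k - i - l))^2"
    by (simp only: ibinom_of_nat ibinom_of_nat_complement)
qed

lemma lam_cong_binomial_sq_conv:
  assumes "i \<le> k" "j \<le> k" "k - i = 2*r" "j = 2*p" "k - j = 2*q"
  shows "[lam k i j = binomial_sq_conv p q r] (mod 4)"
proof -
  have "lam k i j = (\<Sum>l\<le>2*r. (-1)^l * int (j choose l) * int (2*q choose (2*r - l))^2)"
    using lam_eq_alternating_sum[OF assms(1,2)] unfolding assms(3,5) .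
  then show ?thesis
    using alternating_sum_double_cong_mod4[where r = r and p = p and q = q] unfolding assms(4) by simp
qed

lemma minus_two_times_odd_mod4:
  assumes "odd s"
  shows "(- 2 * int s) mod 4 = 2"
proof -
  obtain q where "s = 2*q + 1"
    using assms oddE by blast
  then have "- 2 * int s = 2 + 4 * (- int q - 1)"
    by simp
  moreover have "(2 + 4 * x) mod 4 = 2" for x :: int
    by simp
  ultimately show ?thesis
    by presburger
qed

theorem mainTheorem12:
  fixes k i :: nat
  assumes "k \<ge> 2" and "even k" and "1 \<le> i" and "i \<le> k - 1"
    and "odd (k choose i)" and "odd ((k - 1) choose i)"
  shows "(lam k i (k - i + 2) - lam k i (k - i)) mod 4 = 2"
proof -
  have "even i"
    using assms(2,5) even_binomial_even_odd by blast
  then obtain k' i' where k: "k = 2*k'" and i: "i = 2*i'"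
    using assms(2) by (auto elim!: evenE)
  define r n where "r = k' - i'" and "n = i' - 1"
  have k_eq: "k = 2*(r + n + 1)" and i_eq: "i = 2*(n + 1)"
    using assms(3,4) unfolding k i r_def n_def by auto
  have "[lam k i (k - i + 2) = binomial_sq_conv (Suc r) n r] (mod 4)"
    by (rule lam_cong_binomial_sq_conv) (use k_eq i_eq in auto)
  moreover have "[lam k i (k - i) = binomial_sq_conv r (Suc n) r] (mod 4)"
    by (rule lam_cong_binomial_sq_conv) (use k_eq i_eq in auto)
  ultimately have "[lam k i (k - i + 2) - lam k i (k - i) = - 2 * int (cross_sum r n)] (mod 4)"
    using cong_diff binomial_sq_conv_diff by metis
  moreover have "odd (cross_sum r n)"
    using odd_cross_sum assms(5,6) k_eq i_eq by (simp add: left_diff_distrib' Suc_diff_le)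
  ultimately show ?thesis
    using minus_two_times_odd_mod4 by (simp add: cong_def)
qed

end
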